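(* Let $1\le k<n$. The transition matrix $K$ of the Burnside process on $[k]^n$ satisfies $$K(u,v)\ge\frac{1}{(k-1)!\,k^n}\quad\text{for all }u,v\in[k]^n.$$
   Context: $S_k$ acts on $[k]^n$ by $\sigma(u_1,\dots,u_n)=(\sigma(u_1),\dots,\sigma(u_n))$. The Burnside process on $[k]^n$ is the Markov chain which, from $u$, chooses $\sigma$ uniformly among permutations of $[k]$ fixing every value appearing in $u$, then produces $v\in[k]^n$ by choosing each coordinate independently and uniformly among the fixed points of $\sigma$; i.e. $K(u,v)=\sum_{\sigma\in G_u\cap G_v}\frac{1}{|G_u|\,\mathrm{fp}(\sigma)^n}$ with $G_u=\{\sigma:\sigma u=u\}$ and $\mathrm{fp}(\sigma)$ the number of fixed points of $\sigma$. *)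

theory Defs
  imports Complex_Main "HOL-Combinatorics.Permutations"
begin

definition words :: "nat \<Rightarrow> nat \<Rightarrow> (nat \<Rightarrow> nat) set" where
  "words k n = {0..<n} \<rightarrow>\<^sub>E {1..k}"

definition stab :: "nat \<Rightarrow> nat \<Rightarrow> (nat \<Rightarrow> nat) \<Rightarrow> (nat \<Rightarrow> nat) set" where
  "stab k n u = {\<sigma>. \<sigma> permutes {1..k} \<and> (\<forall>i\<in>{0..<n}. \<sigma> (u i) = u i)}"

definition fp :: "nat \<Rightarrow> (nat \<Rightarrow> nat) \<Rightarrow> nat" where
  "fp k \<sigma> = card {x \<in> {1..k}. \<sigma> x = x}"

definition burnside_K :: "nat \<Rightarrow> nat \<Rightarrow> (nat \<Rightarrow> nat) \<Rightarrow> (nat \<Rightarrow> nat) \<Rightarrow> real" where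
  "burnside_K k n u v =
     (\<Sum>\<sigma>\<in>stab k n u \<inter> stab k n v. 1 / (real (card (stab k n u)) * real (fp k \<sigma>) ^ n))"

end

theory Submission
  imports Defs
begin

text \<open>The identity lies in both stabilisers and fixes all k values, so it alone
  contributes 1 / (|G_u| k^n) to K(u,v). Every permutation in G_u fixes the value u_0,
  so G_u embeds into the permutations of the k - 1 remaining values and |G_u| \<le> (k-1)!.\<close>

lemma id_in_stab: "id \<in> stab k n u"
  unfolding stab_def by simp

lemma finite_stab: "finite (stab k n u)"
  by (rule finite_subset[of _ "{\<sigma>. \<sigma> permutes {1..k}}"])
     (auto simp: stab_def finite_permutations)

lemma card_stab_pos: "0 < card (stab k n u)"
  using finite_stab[of k n u] id_in_stab[of k n u] by (auto simp: card_gt_0_iff)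

lemma fp_id: "fp k id = k"
  unfolding fp_def by (simp del: atLeastAtMost_iff)

lemma card_stab_le_fact:
  assumes "0 < n" and "u \<in> words k n"
  shows "card (stab k n u) \<le> fact (k - 1)"
proof -
  let ?a = "u 0"
  have a: "?a \<in> {1..k}"
    using assms unfolding words_def by auto
  have "stab k n u \<subseteq> {\<sigma>. \<sigma> permutes ({1..k} - {?a})}"
    using \<open>0 < n\<close> by (auto simp: stab_def intro: permutes_superset)
  then have "card (stab k n u) \<le> card {\<sigma>. \<sigma> permutes ({1..k} - {?a})}"
    by (simp add: card_mono finite_permutations)
  also have "\<dots> = fact (k - 1)"
    using a by (simp add: card_permutations)
  finally show ?thesis .
qed

lemma burnside_K_ge_id_term:
  "burnside_K k n u v \<ge> 1 / (real (card (stab k n u)) * real k ^ n)"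
proof -
  have "1 / (real (card (stab k n u)) * real (fp k id) ^ n) \<le> burnside_K k n u v"
    unfolding burnside_K_def
    by (rule member_le_sum[of id]) (simp_all add: id_in_stab finite_stab)
  then show ?thesis
    by (simp add: fp_id)
qed

theorem lemma4p4:
  fixes k n :: nat and u v :: "nat \<Rightarrow> nat"
  assumes "1 \<le> k" and "k < n"
    and "u \<in> words k n" and "v \<in> words k n"
  shows "burnside_K k n u v \<ge> 1 / (fact (k - 1) * real k ^ n)"
proof -
  have "card (stab k n u) \<le> fact (k - 1)"
    using assms by (intro card_stab_le_fact) auto
  then have "real (card (stab k n u)) \<le> fact (k - 1)"
    by (metis of_nat_fact of_nat_le_iff)
  then have "1 / (fact (k - 1) * real k ^ n) \<le> 1 / (real (card (stab k n u)) * real k ^ n)"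
    using card_stab_pos \<open>1 \<le> k\<close> by (intro divide_left_mono mult_right_mono mult_pos_pos) auto
  also have "\<dots> \<le> burnside_K k n u v"
    by (rule burnside_K_ge_id_term)
  finally show ?thesis .
qed

end
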